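(* Let $m$ be a positive integer and let $\delta$ be a positive divisor of $\lambda(m)$. (1) $\displaystyle\sum_{\substack{a\in U_m\\ \mathrm{ind}_m(a)=1}}a\equiv 1\pmod m$. (2) If $\delta=2$ (so $2\mid\lambda(m)$), then $\displaystyle\sum_{\substack{a\in U_m\\ \mathrm{ind}_m(a)=2}}a\equiv -1\pmod m$. (3) If $4\mid\delta$, then $\displaystyle\sum_{\substack{a\in U_m\\ \mathrm{ind}_m(a)=\delta}}a\equiv 0\pmod m$.
   Context: $U_m$ denotes the set of invertible residue classes in $\mathbb{Z}/m\mathbb{Z}$ (sums run over one representative of each such class). For $a$ coprime to $m$, $\mathrm{ind}_m(a)$ is the multiplicative order of $a$ modulo $m$, i.e. the smallest positive $k$ with $a^k\equiv 1\pmod m$. $\lambda(m)$ is the Carmichael function: the smallest $k>0$ such that $a^k\equiv 1\pmod m$ for all $a\in U_m$. *)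

theory Defs
  imports "HOL-Number_Theory.Number_Theory"
begin

end

theory Submission
  imports Defs
begin

text \<open>For \<open>m > 2\<close> the reflection \<open>a \<mapsto> m - a\<close> is a fixed-point-free involution of the
  totatives of \<open>m\<close>, so every set of totatives closed under it has a sum divisible by \<open>m\<close>.
  Since \<open>(m - a)\<^sup>k \<equiv> a\<^sup>k\<close> for even \<open>k\<close>, the set of units of order dividing 2 is closed,
  and so is the set of units of order \<open>\<delta>\<close> when \<open>4 dvd \<delta>\<close>: the order \<open>e\<close> of \<open>m - a\<close> divides
  \<open>\<delta>\<close>, while \<open>\<delta>\<close> divides \<open>2 e\<close>, which forces \<open>e\<close> to be even and hence \<open>e = \<delta>\<close>.
  The only unit of order 1 is 1, which gives (1) and, subtracted from the sum over
  the units of order dividing 2, gives (2).\<close>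

lemma dvd_sum_if_closed_under_reflection:
  fixes S :: "nat set" and m :: nat
  assumes "finite S" and "\<And>a. a \<in> S \<Longrightarrow> a < m \<and> m - a \<in> S \<and> 2 * a \<noteq> m"
  shows "int m dvd (\<Sum>a\<in>S. int a)"
proof -
  define L where "L = {a\<in>S. 2 * a < m}"
  define U where "U = {a\<in>S. 2 * a > m}"
  have S_eq: "S = L \<union> U" using assms(2) unfolding L_def U_def by force
  have "L \<inter> U = {}" "finite L" "finite U" using assms(1) unfolding L_def U_def by auto
  then have sum_split: "(\<Sum>a\<in>S. int a) = (\<Sum>a\<in>L. int a) + (\<Sum>a\<in>U. int a)"
    unfolding S_eq by (rule sum.union_disjoint[rotated 2])
  have "bij_betw (\<lambda>a. m - a) L U"
    by (rule bij_betw_byWitness[where f' = "\<lambda>a. m - a"])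
      (use assms(2) in \<open>force simp: L_def U_def\<close>)+
  then have "(\<Sum>a\<in>U. int a) = (\<Sum>a\<in>L. int m - int a)"
    using sum.reindex_bij_betw[of "\<lambda>a. m - a" L U int] assms(2)
    by (auto simp: L_def intro!: sum.cong)
  with sum_split have "(\<Sum>a\<in>S. int a) = int (card L) * int m"
    by (simp add: sum.distrib[symmetric])
  then show ?thesis by simp
qed

lemma totatives_reflect:
  fixes a m :: nat
  assumes "a \<in> totatives m" and "m > 1"
  shows "m - a \<in> totatives m"
proof -
  have "a < m" using totatives_less[OF assms] .
  have "coprime a m" using assms(1) by (simp add: in_totatives_iff)
  moreover have "gcd (m - a) m = gcd a m" using \<open>a < m\<close> by (simp add: gcd_diff2_nat)
  ultimately have "coprime (m - a) m" by (simp only: coprime_iff_gcd_eq_1)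
  with \<open>a < m\<close> show ?thesis by (simp add: in_totatives_iff)
qed

lemma totatives_double_neq:
  fixes a m :: nat
  assumes "a \<in> totatives m" and "m > 2"
  shows "2 * a \<noteq> m"
proof
  assume half: "2 * a = m"
  then have "a dvd m" by auto
  with assms(1) have "a = 1" by (auto simp: in_totatives_iff coprime_absorb_left)
  with half assms(2) show False by simp
qed

lemma dvd_sum_totatives_if_closed_under_reflection:
  fixes S :: "nat set" and m :: nat
  assumes "m > 2" and "S \<subseteq> totatives m" and "\<And>a. a \<in> S \<Longrightarrow> m - a \<in> S"
  shows "int m dvd (\<Sum>a\<in>S. int a)"
proof (rule dvd_sum_if_closed_under_reflection)
  show "finite S" using assms(2) by (rule finite_subset) simp
  fix a assume "a \<in> S"
  with assms(2) have a: "a \<in> totatives m" by blast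
  have "a < m" using totatives_less[OF a] assms(1) by simp
  moreover have "2 * a \<noteq> m" using totatives_double_neq[OF a assms(1)] .
  ultimately show "a < m \<and> m - a \<in> S \<and> 2 * a \<noteq> m" using assms(3) \<open>a \<in> S\<close> by blast
qed

lemma power_reflect_cong_even:
  fixes a m k :: nat
  assumes "a \<le> m" and "even k"
  shows "[(m - a) ^ k = a ^ k] (mod m)"
proof -
  have "[int (m - a) = - int a] (mod int m)"
    using assms(1) by (simp add: cong_iff_dvd_diff)
  then have "[int (m - a) ^ k = (- int a) ^ k] (mod int m)" by (rule cong_pow)
  with assms(2) have "[int ((m - a) ^ k) = int (a ^ k)] (mod int m)" by simp
  then show ?thesis by (simp only: cong_int_iff)
qed

lemma ord_reflect_dvd_iff:
  fixes a m k :: nat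
  assumes "a \<le> m" and "even k"
  shows "ord m (m - a) dvd k \<longleftrightarrow> ord m a dvd k"
  using power_reflect_cong_even[OF assms]
  by (metis ord_divides cong_sym cong_trans)

lemma ord_reflect_eq:
  fixes a m :: nat
  assumes "a \<le> m" and "4 dvd ord m a"
  shows "ord m (m - a) = ord m a"
proof -
  define e where "e = ord m (m - a)"
  have "even (ord m a)" using assms(2) by (metis dvd_trans even_numeral)
  then have "e dvd ord m a" using ord_reflect_dvd_iff[OF assms(1)] by (simp add: e_def)
  have "ord m a dvd 2 * e" using ord_reflect_dvd_iff[OF assms(1), of "2 * e"] by (simp add: e_def)
  show ?thesis
  proof (cases "e = 0")
    case True
    with \<open>e dvd ord m a\<close> show ?thesis by (simp add: e_def)
  next
    case False
    have "4 dvd 2 * e" using assms(2) \<open>ord m a dvd 2 * e\<close> by (rule dvd_trans)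
    then have "even e" by presburger
    then have "ord m a dvd e" using ord_reflect_dvd_iff[OF assms(1) \<open>even e\<close>] by (simp add: e_def)
    with \<open>e dvd ord m a\<close> show ?thesis by (simp add: e_def dvd_antisym)
  qed
qed

lemma nat_dvd_2_iff: "(d :: nat) dvd 2 \<longleftrightarrow> d = 1 \<or> d = 2"
  using prime_nat_iff[of 2] by auto

lemma Carmichael_neq_1_imp_gt_2:
  fixes m :: nat
  assumes "Carmichael m \<noteq> 1"
  shows "m > 2"
proof (rule ccontr)
  assume "\<not> m > 2"
  then have "m = 0 \<or> m = 1 \<or> m = 2" by auto
  with assms show False by (elim disjE) simp_all
qed

theorem theorem1p6:
  fixes m \<delta> :: nat
  assumes "m > 0" and "\<delta> > 0" and "\<delta> dvd Carmichael m"
  shows "[(\<Sum>a\<in>{a\<in>totatives m. ord m a = 1}. int a) = 1] (mod int m)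
    \<and> (\<delta> = 2 \<longrightarrow> [(\<Sum>a\<in>{a\<in>totatives m. ord m a = 2}. int a) = -1] (mod int m))
    \<and> (4 dvd \<delta> \<longrightarrow> [(\<Sum>a\<in>{a\<in>totatives m. ord m a = \<delta>}. int a) = 0] (mod int m))"
proof (intro conjI impI)
  have order_1: "{a\<in>totatives m. ord m a = 1} = {1}"
    using elements_with_ord_1[OF assms(1)] by simp
  then show "[(\<Sum>a\<in>{a\<in>totatives m. ord m a = 1}. int a) = 1] (mod int m)" by simp
  have m_gt_2: "m > 2" if "\<delta> \<noteq> 1"
    using assms(3) that by (intro Carmichael_neq_1_imp_gt_2) auto
  note reflect = totatives_reflect totatives_le ord_reflect_dvd_iff ord_reflect_eq
  show "[(\<Sum>a\<in>{a\<in>totatives m. ord m a = 2}. int a) = -1] (mod int m)" if "\<delta> = 2"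
  proof -
    have "int m dvd (\<Sum>a\<in>{a\<in>totatives m. ord m a dvd 2}. int a)"
      using m_gt_2 that reflect
      by (intro dvd_sum_totatives_if_closed_under_reflection) auto
    also have "{a\<in>totatives m. ord m a dvd 2}
        = {a\<in>totatives m. ord m a = 1} \<union> {a\<in>totatives m. ord m a = 2}"
      by (auto simp: nat_dvd_2_iff)
    also have "(\<Sum>a\<in>\<dots>. int a) = 1 + (\<Sum>a\<in>{a\<in>totatives m. ord m a = 2}. int a)"
      using order_1 by (subst sum.union_disjoint) auto
    finally show ?thesis by (simp add: cong_iff_dvd_diff add.commute)
  qed
  show "[(\<Sum>a\<in>{a\<in>totatives m. ord m a = \<delta>}. int a) = 0] (mod int m)" if "4 dvd \<delta>"
  proof -
    have "m > 2" using m_gt_2 that by auto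
    then show ?thesis
      using that reflect
      by (auto simp: cong_0_iff intro!: dvd_sum_totatives_if_closed_under_reflection)
  qed
qed

end
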